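(* There exist constants $k>0$ and $\epsilon>0$ such that for every finite non-empty set $J$ of vertices of the hexacarpet $H$, $|\partial J|\ge k|J|^{\epsilon}$. Here $\partial J$ is the set of edges of $H$ with exactly one endpoint in $J$.
   Context: Barycentric subdivisions: $T_0$ is an equilateral triangle with vertices $v_0,v_1,v_2$. $T_n$ is obtained by subdividing every triangular face $\{x,y,z\}$ of $T_{n-1}$ into the six triangles $\{x,m_{xy},c\},\{m_{xy},y,c\},\{y,m_{yz},c\},\{m_{yz},z,c\},\{z,m_{zx},c\},\{m_{zx},x,c\}$, where $m_{uv}$ are side midpoints and $c$ is the barycenter. $H_n$ is the graph whose vertices are the $6^n$ triangular faces of $T_n$, with an edge between two faces for each side they share. This is the planar dual of $T_n$ with the vertex for the unbounded face deleted. $H_{n+1}$ consists of six copies of $H_n$, one per face of $T_1$. $H_n$ is identified with the copy corresponding to the face $\{v_0,b_{01},b\}$ of $T_1$, where $b_{01}$ is the midpoint of $v_0v_1$ and $b$ is the barycenter. The hexacarpet $H$ is the increasing union of the $H_n$. *)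

theory Defs
  imports Complex_Main
begin

definition hv0 :: complex where "hv0 = 0"
definition hv1 :: complex where "hv1 = 1"
definition hv2 :: complex where "hv2 = Complex (1/2) (sqrt 3 / 2)"

definition subdiv :: "complex \<times> complex \<times> complex \<Rightarrow> (complex \<times> complex \<times> complex) set" where
  "subdiv t = (case t of (x, y, z) \<Rightarrow>
     (let mxy = (x + y) / 2; myz = (y + z) / 2; mzx = (z + x) / 2; c = (x + y + z) / 3 in
      {(x, mxy, c), (mxy, y, c), (y, myz, c), (myz, z, c), (z, mzx, c), (mzx, x, c)}))"

primrec Ttri :: "nat \<Rightarrow> (complex \<times> complex \<times> complex) set" where
  "Ttri 0 = {(hv0, hv1, hv2)}"
| "Ttri (Suc n) = \<Union> (subdiv ` Ttri n)"

text \<open>Faces of T_n, a face being its set of three vertices. These are the vertices of H_n;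
two faces are adjacent in H_n iff they share a side, i.e. two vertices.\<close>
definition faces :: "nat \<Rightarrow> complex set set" where
  "faces n = (\<lambda>(x, y, z). {x, y, z}) ` Ttri n"

text \<open>The affine (here linear, since v0 = 0) map sending v0, v1, v2 to v0, b01, b,
where b01 = (v0+v1)/2 and b = (v0+v1+v2)/3. It maps T_n onto the subdivision of
the face {v0,b01,b} of T_1 inside T_(n+1), realising the identification of H_n
with the corresponding copy in H_(n+1).  A point z = s v1 + t v2 is sent to
s b01 + t b.\<close>
definition Lmap :: "complex \<Rightarrow> complex" where
  "Lmap z = complex_of_real (Re z - Im z / sqrt 3) * ((hv0 + hv1) / 2)
          + complex_of_real (2 * Im z / sqrt 3) * ((hv0 + hv1 + hv2) / 3)"

text \<open>Vertices of the hexacarpet H = increasing union of the H_n: rescale H_n back by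
the inverse of Lmap^n, i.e. f is a vertex iff Lmap^n maps f to a face of T_n for some n.\<close>
definition hexV :: "complex set set" where
  "hexV = {f. \<exists>n. (Lmap ^^ n) ` f \<in> faces n}"

definition hex_adj :: "complex set \<Rightarrow> complex set \<Rightarrow> bool" where
  "hex_adj f g \<longleftrightarrow> f \<in> hexV \<and> g \<in> hexV \<and> f \<noteq> g \<and> card (f \<inter> g) = 2"

definition edge_boundary :: "complex set set \<Rightarrow> complex set set set" where
  "edge_boundary J = {{f, g} | f g. hex_adj f g \<and> f \<in> J \<and> g \<notin> J}"

end

theory Submission
  imports Defs
begin

text \<open>
  All faces of a finite set \<open>J\<close> of vertices of \<open>H\<close> become, after rescaling, faces of one level
  \<open>T_n\<close> lying inside a small corner triangle of \<open>T_0\<close>. Let \<open>L\<close> be the largest level such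
  that all faces of some cell of level \<open>L\<close> (a triangle of \<open>T_(n-L)\<close>, subdivided \<open>L\<close> more times)
  belong to \<open>J\<close>. The \<open>2 ^ L\<close> faces along a side of that cell can be transported, side by side
  and level by level, to a side of a triangle of \<open>T_1\<close> that misses \<open>J\<close>, and every face lost
  on the way is paid for by a boundary edge: \<open>2 ^ L \<le> |\<partial>J|\<close>. Conversely, each cell of level \<open>L + 1\<close>
  meeting \<open>J\<close> is not full, hence by connectedness contains a boundary edge; these cells cover
  \<open>J\<close> and have at most \<open>6 ^ (L + 1)\<close> faces each, so \<open>|J| \<le> 6 ^ (L + 1) |\<partial>J|\<close>. Together
  these give \<open>|\<partial>J| \<ge> 6 ^ (-\<epsilon>) |J| ^ \<epsilon>\<close> with \<open>\<epsilon> = 1 / (1 + log 2 6)\<close>.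
\<close>

section \<open>Triangles and their barycentric subdivision\<close>

type_synonym tri = "complex \<times> complex \<times> complex"

definition orient :: "complex \<Rightarrow> complex \<Rightarrow> complex \<Rightarrow> real" where
  "orient a b c = (Re b - Re a) * (Im c - Im a) - (Im b - Im a) * (Re c - Re a)"

fun tri_orient :: "tri \<Rightarrow> real" where
  "tri_orient (a, b, c) = orient a b c"

fun inside :: "tri \<Rightarrow> complex \<Rightarrow> bool" where
  "inside (a, b, c) p \<longleftrightarrow> orient a b p > 0 \<and> orient b c p > 0 \<and> orient c a p > 0"

fun rot :: "tri \<Rightarrow> tri" where
  "rot (a, b, c) = (b, c, a)"

fun verts :: "tri \<Rightarrow> complex set" where
  "verts (a, b, c) = {a, b, c}"

fun barycenter :: "tri \<Rightarrow> complex" where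
  "barycenter (a, b, c) = (a + b + c) / 3"

fun child :: "nat \<Rightarrow> tri \<Rightarrow> tri" where
  "child i (x, y, z) =
     (if i = 0 then (x, (x + y) / 2, (x + y + z) / 3)
      else if i = 1 then ((x + y) / 2, y, (x + y + z) / 3)
      else if i = 2 then (y, (y + z) / 2, (x + y + z) / 3)
      else if i = 3 then ((y + z) / 2, z, (x + y + z) / 3)
      else if i = 4 then (z, (z + x) / 2, (x + y + z) / 3)
      else ((z + x) / 2, x, (x + y + z) / 3))"

lemma orient_swap: "orient b a c = - orient a b c" "orient a c b = - orient a b c"
  by (simp_all add: orient_def algebra_simps)

lemma orient_degenerate: "orient a a c = 0" "orient a b a = 0" "orient a b b = 0"
  by (simp_all add: orient_def algebra_simps)

lemma tri_orient_child: "tri_orient (child i t) = tri_orient t / 6"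
  by (cases t) (auto simp: orient_def field_simps)

lemma tri_orient_child_pos: "tri_orient t > 0 \<Longrightarrow> tri_orient (child i t) > 0"
  by (simp add: tri_orient_child)

lemma inside_child: "inside (child i t) p \<Longrightarrow> inside t p"
  by (cases t) (auto simp: orient_def field_simps split: if_splits)

lemma inside_child_unique:
  "inside (child i t) p \<Longrightarrow> inside (child j t) p \<Longrightarrow> i < 6 \<Longrightarrow> j < 6 \<Longrightarrow> i = j"
  by (cases t) (auto simp: orient_def field_simps split: if_splits)

lemma inside_barycenter: "tri_orient t > 0 \<Longrightarrow> inside t (barycenter t)"
  by (cases t) (auto simp: orient_def field_simps)

lemma tri_orient_rot [simp]: "tri_orient (rot t) = tri_orient t"
  by (cases t) (simp add: orient_def algebra_simps)

lemma inside_rot [simp]: "inside (rot t) = inside t"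
  by (cases t) (auto simp: fun_eq_iff)

lemma verts_rot [simp]: "verts (rot t) = verts t"
  by (cases t) auto

lemma rot_rot_rot [simp]: "rot (rot (rot t)) = t"
  by (cases t) auto

lemma verts_eq_imp_rotation:
  assumes "tri_orient u > 0" "tri_orient v > 0" "verts u = verts v"
  shows "v = u \<or> v = rot u \<or> v = rot (rot u)"
proof -
  obtain a b c where u: "u = (a, b, c)" by (cases u)
  obtain a' b' c' where v: "v = (a', b', c')" by (cases v)
  have pos: "orient a b c > 0" "orient a' b' c' > 0" using assms(1,2) u v by auto
  have "a' \<noteq> b'" "b' \<noteq> c'" "a' \<noteq> c'" using pos(2) by (auto simp: orient_degenerate)
  moreover have "a' \<in> {a, b, c}" "b' \<in> {a, b, c}" "c' \<in> {a, b, c}" using assms(3) u v by auto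
  ultimately have "(a', b', c') \<in> {(a, b, c), (a, c, b), (b, a, c), (b, c, a), (c, a, b), (c, b, a)}"
    by auto
  moreover have "orient a c b < 0" "orient b a c < 0" "orient c b a < 0"
    using pos(1) by (simp_all add: orient_def algebra_simps)
  ultimately have "(a', b', c') \<in> {(a, b, c), (b, c, a), (c, a, b)}"
    using pos(2) by auto
  then show ?thesis using u v by auto
qed

lemma verts_eq_imp_inside_eq:
  "tri_orient u > 0 \<Longrightarrow> tri_orient v > 0 \<Longrightarrow> verts u = verts v \<Longrightarrow> inside v = inside u"
  using verts_eq_imp_rotation[of u v] by auto

lemma card_common_side:
  assumes "orient x y z > 0" "orient y x w > 0"
  shows "card ({x, y, z} \<inter> {y, x, w}) = 2"
proof -
  have "x \<noteq> y" using assms(1) orient_degenerate(1)[of x z] by force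
  moreover have "z \<noteq> x" "z \<noteq> y"
    using assms(1) orient_degenerate(2,3)[of x y] by force+
  moreover have "w \<noteq> x" "w \<noteq> y"
    using assms(2) orient_degenerate(3,2)[of y x] by force+
  moreover have "z \<noteq> w" using assms orient_swap(1)[of y x z] by force
  ultimately have "{x, y, z} \<inter> {y, x, w} = {x, y}" "x \<noteq> y" by auto
  then show ?thesis by simp
qed

lemma orient_affine:
  "orient u v (of_real (1 - t) * m + of_real t * w) = (1 - t) * orient u v m + t * orient u v w"
  by (simp add: orient_def algebra_simps)

lemma orient_midpoint:
  "orient b w ((a + b) / 2) = orient a b w / 2"
  "orient w a ((a + b) / 2) = orient a b w / 2"
  "orient a b ((a + b) / 2) = 0"
  by (simp_all add: orient_def field_simps)

text \<open>Two positively oriented triangles on a common side \<open>ab\<close> overlap: a point on the segment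
  from the midpoint of \<open>ab\<close> towards \<open>w\<close>, close enough to the midpoint, lies inside both.\<close>

lemma common_side_overlap:
  assumes "orient a b w > 0" "orient a b w' > 0"
  shows "\<exists>p. inside (a, b, w) p \<and> inside (a, b, w') p"
proof -
  define m where "m = (a + b) / 2"
  define D where "D = orient a b w' / 2"
  define K where "K = \<bar>orient b w' w\<bar> + \<bar>orient w' a w\<bar> + 1"
  define t where "t = D / (2 * (D + K))"
  define p where "p = of_real (1 - t) * m + of_real t * w"
  have D: "D > 0" and K: "K \<ge> 1" using assms by (simp_all add: D_def K_def)
  have t: "t > 0" "t \<le> 1 / 2" "t * K < D / 2"
    using D K by (simp_all add: t_def field_simps)
  have p: "orient u v p = (1 - t) * orient u v m + t * orient u v w" for u v
    unfolding p_def by (rule orient_affine)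
  have "orient a b p > 0" "orient b w p > 0" "orient w a p > 0"
    using t assms by (simp_all add: p m_def orient_midpoint orient_degenerate)
  moreover have "orient b w' p = (1 - t) * D + t * orient b w' w"
    "orient w' a p = (1 - t) * D + t * orient w' a w"
    by (simp_all add: p m_def D_def orient_midpoint)
  moreover have "orient b w' w \<ge> - K" "orient w' a w \<ge> - K"
    unfolding K_def by arith+
  then have "t * orient b w' w \<ge> - (t * K)" "t * orient w' a w \<ge> - (t * K)"
    using mult_left_mono[of "- K" _ t] t(1) by simp_all
  moreover have "(1 / 2 - t) * D \<ge> 0" using t(2) D by simp
  then have "(1 - t) * D \<ge> D / 2" by (simp add: algebra_simps)
  ultimately show ?thesis using t(3) by auto
qed

declare child.simps [simp del] tri_orient.simps [simp del] inside.simps [simp del]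

primrec cells :: "nat \<Rightarrow> tri \<Rightarrow> tri set" where
  "cells 0 t = {t}"
| "cells (Suc k) t = (\<Union>i<6. cells k (child i t))"

text \<open>The cells of level \<open>k\<close> along the side of \<open>t\<close> joining its first two vertices.\<close>

primrec side_cells :: "nat \<Rightarrow> tri \<Rightarrow> tri set" where
  "side_cells 0 t = {t}"
| "side_cells (Suc k) t = side_cells k (child 0 t) \<union> side_cells k (child 1 t)"

definition level_faces :: "nat \<Rightarrow> tri \<Rightarrow> complex set set" where
  "level_faces k t = verts ` cells k t"

definition side_faces :: "nat \<Rightarrow> tri \<Rightarrow> complex set set" where
  "side_faces k t = verts ` side_cells k t"

lemma UN_less_6: "(\<Union>i<(6::nat). f i) = f 0 \<union> f 1 \<union> f 2 \<union> f 3 \<union> f 4 \<union> f 5"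
  by (auto simp: lessThan_def numeral_eq_Suc less_Suc_eq)

lemma less_6_cases: "(i::nat) < 6 \<Longrightarrow> i = 0 \<or> i = 1 \<or> i = 2 \<or> i = 3 \<or> i = 4 \<or> i = 5"
  by arith

lemma mem_cells_Suc: "s \<in> cells (Suc k) t \<longleftrightarrow> (\<exists>i<6. s \<in> cells k (child i t))"
  by auto

lemma cells_orient_pos: "tri_orient t > 0 \<Longrightarrow> s \<in> cells k t \<Longrightarrow> tri_orient s > 0"
proof (induction k arbitrary: t)
  case (Suc k)
  then obtain i where "s \<in> cells k (child i t)" by (auto simp: mem_cells_Suc)
  then show ?case using Suc tri_orient_child_pos by blast
qed simp

lemma inside_cells: "s \<in> cells k t \<Longrightarrow> inside s p \<Longrightarrow> inside t p"
proof (induction k arbitrary: t)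
  case (Suc k)
  then obtain i where "s \<in> cells k (child i t)" by (auto simp: mem_cells_Suc)
  then show ?case using Suc inside_child by blast
qed simp

lemma cells_inside_unique:
  "tri_orient t > 0 \<Longrightarrow> s \<in> cells k t \<Longrightarrow> s' \<in> cells k t \<Longrightarrow>
    inside s p \<Longrightarrow> inside s' p \<Longrightarrow> s = s'"
proof (induction k arbitrary: t)
  case 0
  then show ?case by simp
next
  case (Suc k)
  from Suc.prems obtain i j where i: "i < 6" "s \<in> cells k (child i t)"
    and j: "j < 6" "s' \<in> cells k (child j t)"
    by (auto simp: mem_cells_Suc)
  have "inside (child i t) p" "inside (child j t) p" using i j Suc.prems inside_cells by blast+
  then have "i = j" using inside_child_unique i j by blast
  then show ?case using Suc.IH[of "child i t"] Suc.prems i j tri_orient_child_pos by blast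
qed

lemma common_inside_point:
  assumes "tri_orient u > 0" "tri_orient u' > 0" "s \<in> cells k u" "s' \<in> cells k' u'"
    and "verts s = verts s'"
  shows "\<exists>p. inside u p \<and> inside u' p"
proof -
  have pos: "tri_orient s > 0" "tri_orient s' > 0" using assms cells_orient_pos by blast+
  then have "inside s (barycenter s)" "inside s' = inside s"
    using inside_barycenter verts_eq_imp_inside_eq assms(5) by blast+
  then show ?thesis using assms(3,4) inside_cells by metis
qed

lemma level_faces_children_disjoint:
  assumes "tri_orient t > 0" "i < 6" "j < 6" "i \<noteq> j"
  shows "level_faces k (child i t) \<inter> level_faces k (child j t) = {}"
proof (rule ccontr)
  assume "level_faces k (child i t) \<inter> level_faces k (child j t) \<noteq> {}"
  then obtain s s' where "s \<in> cells k (child i t)" "s' \<in> cells k (child j t)" "verts s = verts s'"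
    unfolding level_faces_def by force
  then obtain p where "inside (child i t) p" "inside (child j t) p"
    using common_inside_point[of "child i t" "child j t"] tri_orient_child_pos assms(1) by blast
  then show False using inside_child_unique assms by blast
qed

lemma level_faces_disjoint:
  assumes "tri_orient t > 0" "u \<in> cells j t" "u' \<in> cells j t" "u \<noteq> u'"
  shows "level_faces k u \<inter> level_faces k u' = {}"
proof (rule ccontr)
  assume "level_faces k u \<inter> level_faces k u' \<noteq> {}"
  then obtain s s' where "s \<in> cells k u" "s' \<in> cells k u'" "verts s = verts s'"
    unfolding level_faces_def by force
  then obtain p where "inside u p" "inside u' p"
    using common_inside_point[of u u'] cells_orient_pos assms by blast
  then show False using cells_inside_unique assms by blast
qed

lemma finite_cells [simp]: "finite (cells k t)"
  by (induction k arbitrary: t) auto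

lemma finite_level_faces [simp]: "finite (level_faces k t)"
  by (simp add: level_faces_def)

lemma cells_nonempty: "cells k t \<noteq> {}"
proof (induction k arbitrary: t)
  case (Suc k)
  have "cells k (child 0 t) \<subseteq> cells (Suc k) t" unfolding cells.simps by (rule UN_upper) simp
  then show ?case using Suc.IH[of "child 0 t"] by blast
qed simp

lemma level_faces_nonempty: "level_faces k t \<noteq> {}"
  by (simp add: level_faces_def cells_nonempty)

lemma card_cells_le: "card (cells k t) \<le> 6 ^ k"
proof (induction k arbitrary: t)
  case 0
  then show ?case by simp
next
  case (Suc k)
  have "card (cells (Suc k) t) \<le> (\<Sum>i<6. card (cells k (child i t)))"
    by (simp add: card_UN_le)
  also have "\<dots> \<le> (\<Sum>i<(6::nat). 6 ^ k)" by (intro sum_mono Suc.IH)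
  finally show ?case by simp
qed

lemma card_level_faces_le: "card (level_faces k t) \<le> 6 ^ k"
  unfolding level_faces_def using card_image_le[of "cells k t" verts] card_cells_le[of k t] by simp

lemma cells_add: "cells (a + b) t = (\<Union>s\<in>cells a t. cells b s)"
  by (induction a arbitrary: t) auto

lemma level_faces_add: "level_faces (a + b) t = (\<Union>u\<in>cells a t. level_faces b u)"
  by (simp add: level_faces_def cells_add image_UN)

lemma level_faces_Suc: "level_faces (Suc k) t = (\<Union>i<6. level_faces k (child i t))"
  by (simp add: level_faces_def image_UN)

lemma level_faces_child_subset: "i < 6 \<Longrightarrow> level_faces k (child i t) \<subseteq> level_faces (Suc k) t"
  unfolding level_faces_Suc by blast

lemma level_faces_cell_subset: "u \<in> cells d t \<Longrightarrow> level_faces L u \<subseteq> level_faces (d + L) t"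
  by (auto simp: level_faces_add)

lemma side_cells_subset: "side_cells k t \<subseteq> cells k t"
proof (induction k arbitrary: t)
  case (Suc k)
  show ?case using Suc.IH[of "child 0 t"] Suc.IH[of "child 1 t"] by (auto simp: UN_less_6)
qed simp

lemma side_faces_subset: "side_faces k t \<subseteq> level_faces k t"
  unfolding side_faces_def level_faces_def using side_cells_subset by blast

lemma finite_side_faces [simp]: "finite (side_faces k t)"
  using side_faces_subset finite_level_faces finite_subset by blast

lemma side_faces_Suc: "side_faces (Suc k) t = side_faces k (child 0 t) \<union> side_faces k (child 1 t)"
  by (simp add: side_faces_def image_Un)

lemma side_faces_children_disjoint:
  "tri_orient t > 0 \<Longrightarrow> i < 6 \<Longrightarrow> j < 6 \<Longrightarrow> i \<noteq> j \<Longrightarrow>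
    side_faces k (child i t) \<inter> side_faces k (child j t) = {}"
  using level_faces_children_disjoint[of t i j k] side_faces_subset[of k "child i t"]
    side_faces_subset[of k "child j t"] by blast

lemma card_side_faces: "tri_orient t > 0 \<Longrightarrow> card (side_faces k t) = 2 ^ k"
proof (induction k arbitrary: t)
  case 0
  then show ?case by (simp add: side_faces_def)
next
  case (Suc k)
  have "side_faces k (child 0 t) \<inter> side_faces k (child 1 t) = {}"
    using side_faces_children_disjoint[OF Suc.prems] by simp
  then show ?case
    using Suc.IH[OF tri_orient_child_pos[OF Suc.prems]] by (simp add: side_faces_Suc card_Un_disjoint)
qed

lemma child_rot:
  "child 0 (rot t) = child 2 t" "child 1 (rot t) = child 3 t" "child 2 (rot t) = child 4 t"
  "child 3 (rot t) = child 5 t" "child 4 (rot t) = child 0 t" "child 5 (rot t) = child 1 t"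
  by (cases t; simp add: child.simps algebra_simps)+

lemma cells_Suc_rot: "cells (Suc k) (rot t) = cells (Suc k) t"
  using child_rot by (simp add: UN_less_6 Un_ac)

lemma level_faces_rot [simp]: "level_faces k (rot t) = level_faces k t"
  by (cases k) (simp_all add: level_faces_def cells_Suc_rot del: cells.simps(2))

lemma cells_rot_ex: "u \<in> cells d t \<Longrightarrow> \<exists>u'\<in>cells d (rot t). level_faces L u' = level_faces L u"
  by (cases d) (auto simp del: cells.simps(2) simp: cells_Suc_rot)

lemma side_faces_Suc_rot:
  "side_faces (Suc k) (rot t) = side_faces k (child 2 t) \<union> side_faces k (child 3 t)"
  "side_faces (Suc k) (rot (rot t)) = side_faces k (child 4 t) \<union> side_faces k (child 5 t)"
  using child_rot by (simp_all add: side_faces_Suc)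

section \<open>Boundary pairs inside a subdivided triangle\<close>

definition bdry_pairs :: "complex set set \<Rightarrow> complex set set \<Rightarrow> complex set set \<Rightarrow>
    (complex set \<times> complex set) set" where
  "bdry_pairs X S S' = {(f, g). f \<in> S \<and> g \<in> S' \<and> f \<in> X \<and> g \<notin> X \<and> card (f \<inter> g) = 2}"

abbreviation inner_bdry :: "complex set set \<Rightarrow> nat \<Rightarrow> tri \<Rightarrow> (complex set \<times> complex set) set" where
  "inner_bdry X k t \<equiv> bdry_pairs X (level_faces k t) (level_faces k t)"

definition count_in :: "complex set set \<Rightarrow> complex set set \<Rightarrow> nat" where
  "count_in X S = card (S \<inter> X)"

lemma finite_bdry_pairs: "finite S \<Longrightarrow> finite S' \<Longrightarrow> finite (bdry_pairs X S S')"
  by (rule finite_subset[of _ "S \<times> S'"]) (auto simp: bdry_pairs_def)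

lemma bdry_pairs_mono: "S1 \<subseteq> T1 \<Longrightarrow> S2 \<subseteq> T2 \<Longrightarrow> bdry_pairs X S1 S2 \<subseteq> bdry_pairs X T1 T2"
  by (auto simp: bdry_pairs_def)

lemma card_bdry_pairs_mono:
  "S1 \<subseteq> T1 \<Longrightarrow> S2 \<subseteq> T2 \<Longrightarrow> finite T1 \<Longrightarrow> finite T2 \<Longrightarrow>
    card (bdry_pairs X S1 S2) \<le> card (bdry_pairs X T1 T2)"
  by (intro card_mono finite_bdry_pairs bdry_pairs_mono)

lemma bdry_pairs_fst: "p \<in> bdry_pairs X S S' \<Longrightarrow> fst p \<in> S"
  by (auto simp: bdry_pairs_def)

lemma bdry_pairs_disjoint:
  "S1 \<inter> T1 = {} \<Longrightarrow> bdry_pairs X S1 S2 \<inter> bdry_pairs X T1 T2 = {}"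
  by (auto simp: bdry_pairs_def)

lemma count_in_Un:
  "A \<inter> B = {} \<Longrightarrow> finite A \<Longrightarrow> finite B \<Longrightarrow>
    count_in X (A \<union> B) = count_in X A + count_in X B"
  unfolding count_in_def by (subst card_Un_disjoint[symmetric]) (auto simp: Int_Un_distrib2)

lemma count_in_subset: "S \<subseteq> X \<Longrightarrow> count_in X S = card S"
  unfolding count_in_def by (simp add: Int_absorb2)

lemma count_in_disjoint: "S \<inter> X = {} \<Longrightarrow> count_in X S = 0"
  unfolding count_in_def by simp

lemma count_in_side_faces_Suc:
  assumes "tri_orient t > 0"
  shows "count_in X (side_faces (Suc k) t)
      = count_in X (side_faces k (child 0 t)) + count_in X (side_faces k (child 1 t))"
    and "count_in X (side_faces (Suc k) (rot t))
      = count_in X (side_faces k (child 2 t)) + count_in X (side_faces k (child 3 t))"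
    and "count_in X (side_faces (Suc k) (rot (rot t)))
      = count_in X (side_faces k (child 4 t)) + count_in X (side_faces k (child 5 t))"
  unfolding side_faces_Suc_rot[of k t] side_faces_Suc[of k t]
  by (rule count_in_Un; use side_faces_children_disjoint[OF assms] in auto)+

text \<open>Two triangles glued along a side \<open>xy\<close> with opposite orientations: the faces along the side
  are matched in adjacent pairs, and every face in \<open>X\<close> whose partner is not in \<open>X\<close> gives a
  boundary pair.\<close>

lemma count_in_side_le_opposite:
  assumes "tri_orient t > 0" "tri_orient t' > 0" "fst t = fst (snd t')" "fst (snd t) = fst t'"
  shows "count_in X (side_faces k t)
    \<le> count_in X (side_faces k t') + card (bdry_pairs X (side_faces k t) (side_faces k t'))"
  using assms
proof (induction k arbitrary: t t')
  case 0
  obtain x y z where t: "t = (x, y, z)" by (cases t)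
  obtain z' where t': "t' = (y, x, z')" using 0(3,4) t by (cases t') auto
  have "card (verts t \<inter> verts t') = 2"
    using 0(1,2) card_common_side[of x y z z'] t t' by (simp add: tri_orient.simps)
  show ?case
  proof (cases "verts t \<in> X \<and> verts t' \<notin> X")
    case True
    then have "bdry_pairs X (side_faces 0 t) (side_faces 0 t') = {(verts t, verts t')}"
      using \<open>card (verts t \<inter> verts t') = 2\<close> by (auto simp: bdry_pairs_def side_faces_def)
    then show ?thesis using True by (simp add: count_in_def side_faces_def)
  next
    case False
    have "card ({verts t} \<inter> X) \<le> 1" by (cases "verts t \<in> X") auto
    then show ?thesis using False by (auto simp: count_in_def side_faces_def)
  qed
next
  case (Suc k)
  obtain x y z where t: "t = (x, y, z)" by (cases t)
  obtain z' where t': "t' = (y, x, z')" using Suc.prems(3,4) t by (cases t') auto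
  have pos: "tri_orient (child i t) > 0" "tri_orient (child i t') > 0" for i
    using Suc.prems tri_orient_child_pos by blast+
  have "(y + x) / 2 = (x + y) / 2" by (simp add: add.commute)
  then have sides: "fst (child 0 t) = fst (snd (child 1 t'))" "fst (snd (child 0 t)) = fst (child 1 t')"
    "fst (child 1 t) = fst (snd (child 0 t'))" "fst (snd (child 1 t)) = fst (child 0 t')"
    using t t' by (simp_all add: child.simps)
  define A0 where "A0 = side_faces k (child 0 t)"
  define A1 where "A1 = side_faces k (child 1 t)"
  define B0 where "B0 = side_faces k (child 0 t')"
  define B1 where "B1 = side_faces k (child 1 t')"
  have IH: "count_in X A0 \<le> count_in X B1 + card (bdry_pairs X A0 B1)"
    "count_in X A1 \<le> count_in X B0 + card (bdry_pairs X A1 B0)"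
    unfolding A0_def A1_def B0_def B1_def using pos sides by (auto intro: Suc.IH)
  have disj: "A0 \<inter> A1 = {}" "B0 \<inter> B1 = {}"
    using side_faces_children_disjoint[OF Suc.prems(1)] side_faces_children_disjoint[OF Suc.prems(2)]
    by (simp_all add: A0_def A1_def B0_def B1_def)
  have fin: "finite A0" "finite A1" "finite B0" "finite B1" by (simp_all add: A0_def A1_def B0_def B1_def)
  have "card (bdry_pairs X A0 B1) + card (bdry_pairs X A1 B0)
      = card (bdry_pairs X A0 B1 \<union> bdry_pairs X A1 B0)"
    using fin disj(1) by (simp add: card_Un_disjoint finite_bdry_pairs bdry_pairs_disjoint)
  also have "\<dots> \<le> card (bdry_pairs X (A0 \<union> A1) (B0 \<union> B1))"
    using fin by (intro card_mono finite_bdry_pairs) (auto simp: bdry_pairs_def)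
  finally have "card (bdry_pairs X A0 B1) + card (bdry_pairs X A1 B0)
      \<le> card (bdry_pairs X (A0 \<union> A1) (B0 \<union> B1))" .
  moreover have "count_in X (A0 \<union> A1) = count_in X A0 + count_in X A1"
    "count_in X (B0 \<union> B1) = count_in X B0 + count_in X B1"
    using count_in_Un disj fin by blast+
  ultimately show ?case
    using IH unfolding side_faces_Suc A0_def[symmetric] A1_def[symmetric] B0_def[symmetric]
      B1_def[symmetric] by simp
qed

lemma less_6_numerals: "(0::nat) < 6" "(1::nat) < 6" "(2::nat) < 6" "(3::nat) < 6" "(4::nat) < 6" "(5::nat) < 6"
  by simp_all

lemma Suc_mod_6_numerals: "(1::nat) = Suc 0 mod 6" "(2::nat) = Suc 1 mod 6" "(3::nat) = Suc 2 mod 6"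
  "(4::nat) = Suc 3 mod 6" "(5::nat) = Suc 4 mod 6" "(0::nat) = Suc 5 mod 6"
  by simp_all

text \<open>Consecutive children \<open>i\<close> and \<open>i + 1\<close> (mod 6) share the side from the barycenter to a
  vertex or side midpoint of \<open>t\<close>; it is the side \<open>rot (child i t)\<close> of the one and the
  side \<open>rot (rot (child (i + 1) t))\<close> of the other.\<close>

lemma count_in_adjacent_children:
  assumes "tri_orient t > 0" "i < 6" "j = Suc i mod 6"
  shows "count_in X (side_faces k (rot (child i t)))
      \<le> count_in X (side_faces k (rot (rot (child j t))))
        + card (bdry_pairs X (level_faces k (child i t)) (level_faces k (child j t)))"
    and "count_in X (side_faces k (rot (rot (child j t))))
      \<le> count_in X (side_faces k (rot (child i t)))
        + card (bdry_pairs X (level_faces k (child j t)) (level_faces k (child i t)))"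
proof -
  let ?s = "rot (child i t)" and ?s' = "rot (rot (child j t))"
  have common: "fst ?s = fst (snd ?s')" "fst (snd ?s) = fst ?s'"
    using less_6_cases[OF assms(2)] assms(3) by (cases t; auto simp: child.simps)+
  have pos: "tri_orient ?s > 0" "tri_orient ?s' > 0"
    using assms(1) tri_orient_child_pos by simp_all
  have "card (bdry_pairs X (side_faces k ?s) (side_faces k ?s'))
      \<le> card (bdry_pairs X (level_faces k (child i t)) (level_faces k (child j t)))"
    "card (bdry_pairs X (side_faces k ?s') (side_faces k ?s))
      \<le> card (bdry_pairs X (level_faces k (child j t)) (level_faces k (child i t)))"
    using side_faces_subset[of k ?s] side_faces_subset[of k ?s']
    by (auto intro!: card_bdry_pairs_mono)
  then show "count_in X (side_faces k ?s)
      \<le> count_in X (side_faces k ?s')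
        + card (bdry_pairs X (level_faces k (child i t)) (level_faces k (child j t)))"
    and "count_in X (side_faces k ?s')
      \<le> count_in X (side_faces k ?s)
        + card (bdry_pairs X (level_faces k (child j t)) (level_faces k (child i t)))"
    using count_in_side_le_opposite[OF pos common, of X k]
      count_in_side_le_opposite[OF pos(2,1) common(2)[symmetric] common(1)[symmetric], of X k]
    by linarith+
qed

lemma sum_card_bdry_pairs_children:
  assumes "tri_orient t > 0"
  shows "(\<Sum>(i, j)\<in>{..<6}\<times>{..<6}. card (bdry_pairs X (level_faces k (child i t)) (level_faces k (child j t))))
    \<le> card (inner_bdry X (Suc k) t)"
proof -
  let ?I = "{..<6::nat} \<times> {..<6::nat}"
  let ?A = "\<lambda>(i, j). bdry_pairs X (level_faces k (child i t)) (level_faces k (child j t))"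
  have "(\<Sum>ij\<in>?I. card (?A ij)) = card (\<Union>ij\<in>?I. ?A ij)"
  proof (rule card_UN_disjoint[symmetric])
    show "\<forall>ij\<in>?I. \<forall>ij'\<in>?I. ij \<noteq> ij' \<longrightarrow> ?A ij \<inter> ?A ij' = {}"
      using level_faces_children_disjoint[OF assms] by (fastforce simp: bdry_pairs_def)
  qed (auto simp: finite_bdry_pairs)
  also have "\<dots> \<le> card (inner_bdry X (Suc k) t)"
    by (intro card_mono finite_bdry_pairs) (auto simp: bdry_pairs_def level_faces_Suc)
  finally show ?thesis by (simp add: case_prod_beta')
qed

lemma sum_card_bdry_pairs_adjacent_le:
  fixes X :: "complex set set" and k :: nat
  assumes "tri_orient t > 0"
  defines "G \<equiv> \<lambda>i j. card (bdry_pairs X (level_faces k (child i t)) (level_faces k (child j t)))"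
  shows "G 0 0 + G 1 1 + G 2 2 + G 3 3 + G 4 4 + G 5 5 + G 0 1 + G 1 0 + G 1 2 + G 2 1
    + G 2 3 + G 3 2 + G 3 4 + G 4 3 + G 4 5 + G 5 4 + G 5 0 + G 0 5 \<le> card (inner_bdry X (Suc k) t)"
proof -
  let ?S = "{(0, 0), (1, 1), (2, 2), (3, 3), (4, 4), (5, 5), (0, 1), (1, 0), (1, 2), (2, 1), (2, 3),
    (3, 2), (3, 4), (4, 3), (4, 5), (5, 4), (5, 0), (0, 5)} :: (nat \<times> nat) set"
  have "(\<Sum>(i, j)\<in>?S. G i j) \<le> (\<Sum>(i, j)\<in>{..<6}\<times>{..<6}. G i j)"
    by (rule sum_mono2) auto
  also have "\<dots> \<le> card (inner_bdry X (Suc k) t)"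
    using sum_card_bdry_pairs_children[OF assms(1)] by (simp add: G_def)
  finally show ?thesis by simp
qed

text \<open>At level \<open>k + 1\<close> the sides of \<open>t\<close> and \<open>rot t\<close> are made of the sides of children
  0, 1 and 2, 3 respectively; one passes from one to the other through the ring of children around
  the barycenter, paying for each child and each shared side.\<close>

lemma count_in_side_le_rot:
  "tri_orient t > 0 \<Longrightarrow>
    count_in X (side_faces k t) \<le> count_in X (side_faces k (rot t)) + card (inner_bdry X k t) \<and>
    count_in X (side_faces k t) \<le> count_in X (side_faces k (rot (rot t))) + card (inner_bdry X k t)"
proof (induction k arbitrary: t)
  case 0
  then show ?case by (simp add: side_faces_def)
next
  case (Suc k)
  have D: "count_in X (side_faces k c) \<le> count_in X (side_faces k (rot c)) + card (inner_bdry X k c)"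
    "count_in X (side_faces k c) \<le> count_in X (side_faces k (rot (rot c))) + card (inner_bdry X k c)"
    "count_in X (side_faces k (rot c)) \<le> count_in X (side_faces k (rot (rot c))) + card (inner_bdry X k c)"
    "count_in X (side_faces k (rot c)) \<le> count_in X (side_faces k c) + card (inner_bdry X k c)"
    "count_in X (side_faces k (rot (rot c))) \<le> count_in X (side_faces k c) + card (inner_bdry X k c)"
    "count_in X (side_faces k (rot (rot c))) \<le> count_in X (side_faces k (rot c)) + card (inner_bdry X k c)"
    if "tri_orient c > 0" for c
    using Suc.IH[of c] Suc.IH[of "rot c"] Suc.IH[of "rot (rot c)"] that by simp_all
  have p: "tri_orient (child i t) > 0" for i using Suc.prems tri_orient_child_pos by blast
  note D0 = D[OF p[of 0]] and D1 = D[OF p[of 1]] and D2 = D[OF p[of 2]]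
    and D3 = D[OF p[of 3]] and D4 = D[OF p[of 4]] and D5 = D[OF p[of 5]]
  note C0 = count_in_adjacent_children[OF Suc.prems less_6_numerals(1) Suc_mod_6_numerals(1), of X k]
    and C1 = count_in_adjacent_children[OF Suc.prems less_6_numerals(2) Suc_mod_6_numerals(2), of X k]
    and C2 = count_in_adjacent_children[OF Suc.prems less_6_numerals(3) Suc_mod_6_numerals(3), of X k]
    and C3 = count_in_adjacent_children[OF Suc.prems less_6_numerals(4) Suc_mod_6_numerals(4), of X k]
    and C4 = count_in_adjacent_children[OF Suc.prems less_6_numerals(5) Suc_mod_6_numerals(5), of X k]
    and C5 = count_in_adjacent_children[OF Suc.prems less_6_numerals(6) Suc_mod_6_numerals(6), of X k]
  note B = sum_card_bdry_pairs_adjacent_le[OF Suc.prems, of X k]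
  note n = count_in_side_faces_Suc[OF Suc.prems, of X k]
  show ?case
  proof
    show "count_in X (side_faces (Suc k) t)
        \<le> count_in X (side_faces (Suc k) (rot t)) + card (inner_bdry X (Suc k) t)"
      using D1(1) C1(1) D2(5) D0(2) C5(2) D5(3) C4(2) D4(3) C3(2) D3(4) n(1,2) B by linarith
    show "count_in X (side_faces (Suc k) t)
        \<le> count_in X (side_faces (Suc k) (rot (rot t))) + card (inner_bdry X (Suc k) t)"
      using D0(2) C5(2) D5(4) D1(1) C1(1) D2(6) C2(1) D3(6) C3(1) D4(5) n(1,3) B by linarith
  qed
qed

lemma count_in_sides_le:
  assumes "tri_orient c > 0"
  shows "count_in X (side_faces k c) \<le> count_in X (side_faces k (rot c)) + card (inner_bdry X k c)"
    "count_in X (side_faces k c) \<le> count_in X (side_faces k (rot (rot c))) + card (inner_bdry X k c)"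
    "count_in X (side_faces k (rot c)) \<le> count_in X (side_faces k (rot (rot c))) + card (inner_bdry X k c)"
    "count_in X (side_faces k (rot c)) \<le> count_in X (side_faces k c) + card (inner_bdry X k c)"
    "count_in X (side_faces k (rot (rot c))) \<le> count_in X (side_faces k c) + card (inner_bdry X k c)"
    "count_in X (side_faces k (rot (rot c))) \<le> count_in X (side_faces k (rot c)) + card (inner_bdry X k c)"
  using count_in_side_le_rot[of c X k] count_in_side_le_rot[of "rot c" X k]
    count_in_side_le_rot[of "rot (rot c)" X k] assms by simp_all

text \<open>A cell of level \<open>d\<close> of \<open>Q\<close> whose \<open>L\<close>-th subdivision lies in \<open>X\<close> has \<open>2 ^ L\<close> faces
  of \<open>X\<close> along each side; transporting this count to the first side of \<open>Q\<close> costs only inner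
  boundary pairs of \<open>Q\<close>.\<close>

lemma full_cell_side_bound:
  "tri_orient Q > 0 \<Longrightarrow> u \<in> cells d Q \<Longrightarrow> level_faces L u \<subseteq> X \<Longrightarrow>
    2 ^ L \<le> count_in X (side_faces (d + L) Q) + card (inner_bdry X (d + L) Q)"
proof (induction d arbitrary: Q u)
  case 0
  then have "count_in X (side_faces L Q) = 2 ^ L"
    using side_faces_subset[of L Q] count_in_subset[of "side_faces L Q" X] card_side_faces[of Q L]
    by auto
  then show ?case by simp
next
  case (Suc d)
  let ?K = "d + L"
  from Suc.prems(2) obtain i where i: "i < 6" "u \<in> cells d (child i Q)"
    by (auto simp: mem_cells_Suc)
  have p: "tri_orient (child j Q) > 0" for j using Suc.prems tri_orient_child_pos by blast
  obtain u1 where u1: "u1 \<in> cells d (rot (child i Q))" "level_faces L u1 = level_faces L u"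
    using cells_rot_ex[OF i(2)] by blast
  obtain u2 where u2: "u2 \<in> cells d (rot (rot (child i Q)))" "level_faces L u2 = level_faces L u1"
    using cells_rot_ex[OF u1(1)] by blast
  have E0: "2 ^ L \<le> count_in X (side_faces ?K (child i Q)) + card (inner_bdry X ?K (child i Q))"
    using Suc.IH[OF p i(2) Suc.prems(3)] .
  have E1: "2 ^ L \<le> count_in X (side_faces ?K (rot (child i Q))) + card (inner_bdry X ?K (child i Q))"
    using Suc.IH[of "rot (child i Q)" u1] u1 p Suc.prems(3) by simp
  have E2: "2 ^ L \<le> count_in X (side_faces ?K (rot (rot (child i Q)))) + card (inner_bdry X ?K (child i Q))"
    using Suc.IH[of "rot (rot (child i Q))" u2] u1 u2 p Suc.prems(3) by simp
  note D0 = count_in_sides_le[OF p[of 0], of X ?K] and D1 = count_in_sides_le[OF p[of 1], of X ?K]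
    and D2 = count_in_sides_le[OF p[of 2], of X ?K] and D5 = count_in_sides_le[OF p[of 5], of X ?K]
  note C1 = count_in_adjacent_children[OF Suc.prems(1) less_6_numerals(2) Suc_mod_6_numerals(2), of X ?K]
    and C2 = count_in_adjacent_children[OF Suc.prems(1) less_6_numerals(3) Suc_mod_6_numerals(3), of X ?K]
    and C4 = count_in_adjacent_children[OF Suc.prems(1) less_6_numerals(5) Suc_mod_6_numerals(5), of X ?K]
    and C5 = count_in_adjacent_children[OF Suc.prems(1) less_6_numerals(6) Suc_mod_6_numerals(6), of X ?K]
  note B = sum_card_bdry_pairs_adjacent_le[OF Suc.prems(1), of X ?K]
  note n0 = count_in_side_faces_Suc(1)[OF Suc.prems(1), of X ?K]
  from less_6_cases[OF i(1)]
  have "2 ^ L \<le> count_in X (side_faces (Suc ?K) Q) + card (inner_bdry X (Suc ?K) Q)"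
  proof (elim disjE)
    assume h: "i = 0" then show ?thesis using E0[unfolded h] n0 B by linarith
  next
    assume h: "i = 1" then show ?thesis using E0[unfolded h] n0 B by linarith
  next
    assume h: "i = 2" then show ?thesis using E2[unfolded h] C1(2) D1(4) n0 B by linarith
  next
    assume h: "i = 3" then show ?thesis using E2[unfolded h] C2(2) D2(3) C1(2) D1(4) n0 B by linarith
  next
    assume h: "i = 4" then show ?thesis using E1[unfolded h] C4(1) D5(6) C5(1) D0(5) n0 B by linarith
  next
    assume h: "i = 5" then show ?thesis using E1[unfolded h] C5(1) D0(5) n0 B by linarith
  qed
  then show ?case by simp
qed

lemma exists_cyclic_change:
  assumes "i0 < n" "j0 < n" "P i0" "\<not> P j0"
  shows "\<exists>i<n. P i \<noteq> P (Suc i mod n)"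
proof (rule ccontr)
  assume none: "\<not> ?thesis"
  have "P i \<longleftrightarrow> P 0" if "i < n" for i
    using that
  proof (induction i)
    case (Suc i)
    then have "P i \<longleftrightarrow> P (Suc i)" using none mod_less[OF Suc.prems] by (metis Suc_lessD)
    then show ?case using Suc by (metis Suc_lessD)
  qed simp
  then show False using assms by metis
qed

lemma inner_bdry_adjacent_children_nonempty:
  assumes "tri_orient t > 0" "i < 6" "j = Suc i mod 6"
    and "level_faces k (child i t) \<subseteq> X \<and> level_faces k (child j t) \<inter> X = {} \<or>
      level_faces k (child j t) \<subseteq> X \<and> level_faces k (child i t) \<inter> X = {}"
  shows "inner_bdry X (Suc k) t \<noteq> {}"
proof -
  let ?s = "rot (child i t)" and ?s' = "rot (rot (child j t))"
  have j: "j < 6" using assms(3) by simp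
  have sides: "side_faces k ?s \<subseteq> level_faces k (child i t)" "side_faces k ?s' \<subseteq> level_faces k (child j t)"
    using side_faces_subset[of k ?s] side_faces_subset[of k ?s'] by simp_all
  have card: "card (side_faces k ?s) \<ge> 1" "card (side_faces k ?s') \<ge> 1"
    using card_side_faces[of ?s k] card_side_faces[of ?s' k] assms(1) tri_orient_child_pos by simp_all
  note adjacent = count_in_adjacent_children[OF assms(1-3), of X k]
  from assms(4)
  have "card (bdry_pairs X (level_faces k (child i t)) (level_faces k (child j t))) \<ge> 1 \<or>
      card (bdry_pairs X (level_faces k (child j t)) (level_faces k (child i t))) \<ge> 1"
  proof (elim disjE conjE)
    assume "level_faces k (child i t) \<subseteq> X" "level_faces k (child j t) \<inter> X = {}"
    then have "count_in X (side_faces k ?s) = card (side_faces k ?s)" "count_in X (side_faces k ?s') = 0"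
      using sides by (auto intro!: count_in_subset count_in_disjoint)
    then show ?thesis using adjacent(1) card by linarith
  next
    assume "level_faces k (child j t) \<subseteq> X" "level_faces k (child i t) \<inter> X = {}"
    then have "count_in X (side_faces k ?s') = card (side_faces k ?s')" "count_in X (side_faces k ?s) = 0"
      using sides by (auto intro!: count_in_subset count_in_disjoint)
    then show ?thesis using adjacent(2) card by linarith
  qed
  then have "bdry_pairs X (level_faces k (child i t)) (level_faces k (child j t)) \<noteq> {} \<or>
      bdry_pairs X (level_faces k (child j t)) (level_faces k (child i t)) \<noteq> {}"
    by auto
  moreover have "bdry_pairs X (level_faces k (child i t)) (level_faces k (child j t)) \<subseteq> inner_bdry X (Suc k) t"
    "bdry_pairs X (level_faces k (child j t)) (level_faces k (child i t)) \<subseteq> inner_bdry X (Suc k) t"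
    using level_faces_child_subset[OF assms(2)] level_faces_child_subset[OF j]
    by (simp_all add: bdry_pairs_mono)
  ultimately show ?thesis by blast
qed

text \<open>Connectedness of the face graph of a subdivided triangle.\<close>

lemma inner_bdry_nonempty:
  "tri_orient t > 0 \<Longrightarrow> level_faces k t \<inter> X \<noteq> {} \<Longrightarrow> \<not> level_faces k t \<subseteq> X \<Longrightarrow> inner_bdry X k t \<noteq> {}"
proof (induction k arbitrary: t)
  case 0
  then show ?case by (auto simp: level_faces_def)
next
  case (Suc k)
  have pos: "tri_orient (child i t) > 0" for i using Suc.prems tri_orient_child_pos by blast
  show ?case
  proof (cases "\<exists>i<6. level_faces k (child i t) \<inter> X \<noteq> {} \<and> \<not> level_faces k (child i t) \<subseteq> X")
    case True
    then obtain i where i: "i < 6" "level_faces k (child i t) \<inter> X \<noteq> {}" "\<not> level_faces k (child i t) \<subseteq> X"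
      by blast
    have "inner_bdry X k (child i t) \<noteq> {}" using Suc.IH[OF pos i(2,3)] .
    moreover have "inner_bdry X k (child i t) \<subseteq> inner_bdry X (Suc k) t"
      using level_faces_child_subset[OF i(1)] by (simp add: bdry_pairs_mono)
    ultimately show ?thesis by blast
  next
    case False
    define P where "P i \<longleftrightarrow> level_faces k (child i t) \<subseteq> X" for i
    obtain i0 where "i0 < 6" "P i0" using Suc.prems(2) False unfolding P_def level_faces_Suc by blast
    moreover obtain j0 where "j0 < 6" "\<not> P j0" using Suc.prems(3) unfolding P_def level_faces_Suc by blast
    ultimately obtain i where i: "i < 6" "P i \<noteq> P (Suc i mod 6)"
      using exists_cyclic_change[of i0 6 j0 P] by blast
    have empty: "level_faces k (child l t) \<inter> X = {}" if "l < 6" "\<not> P l" for l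
      using False that by (auto simp: P_def)
    from i(2) have "P i \<and> \<not> P (Suc i mod 6) \<or> P (Suc i mod 6) \<and> \<not> P i" by blast
    then show ?thesis
      using empty[OF i(1)] empty[of "Suc i mod 6"]
      by (intro inner_bdry_adjacent_children_nonempty[OF Suc.prems(1) i(1) refl]) (auto simp: P_def)
  qed
qed

section \<open>The isoperimetric estimate inside a triangle\<close>

lemma card_le_cells_meeting:
  assumes "X \<subseteq> level_faces (d + m) t"
  shows "card X \<le> card {u \<in> cells d t. level_faces m u \<inter> X \<noteq> {}} * 6 ^ m"
proof -
  let ?P = "{u \<in> cells d t. level_faces m u \<inter> X \<noteq> {}}"
  have fin: "finite ?P" by simp
  have "X \<subseteq> (\<Union>u\<in>?P. level_faces m u)" using assms unfolding level_faces_add by blast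
  then have "card X \<le> card (\<Union>u\<in>?P. level_faces m u)" using fin by (intro card_mono) auto
  also have "\<dots> \<le> (\<Sum>u\<in>?P. card (level_faces m u))" by (rule card_UN_le[OF fin])
  also have "\<dots> \<le> (\<Sum>u\<in>?P. 6 ^ m)" by (intro sum_mono card_level_faces_le)
  finally show ?thesis by simp
qed

text \<open>Each cell that meets \<open>X\<close> without being covered by it contains an inner boundary pair,
  and distinct cells contain disjoint sets of faces.\<close>

lemma card_cells_meeting_le_inner_bdry:
  assumes "tri_orient t > 0" "\<forall>u\<in>cells d t. \<not> level_faces m u \<subseteq> X"
  shows "card {u \<in> cells d t. level_faces m u \<inter> X \<noteq> {}} \<le> card (inner_bdry X (d + m) t)"
proof -
  let ?P = "{u \<in> cells d t. level_faces m u \<inter> X \<noteq> {}}"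
  define e where "e u = (SOME p. p \<in> inner_bdry X m u)" for u
  have e: "e u \<in> inner_bdry X m u" if "u \<in> ?P" for u
  proof -
    have "u \<in> cells d t" "level_faces m u \<inter> X \<noteq> {}" using that by auto
    then have "inner_bdry X m u \<noteq> {}"
      using assms inner_bdry_nonempty[of u m X] cells_orient_pos[OF assms(1)] by blast
    then show ?thesis unfolding e_def by (simp add: some_in_eq)
  qed
  have "inj_on e ?P"
  proof (rule inj_onI)
    fix u v assume uv: "u \<in> ?P" "v \<in> ?P" "e u = e v"
    then have "fst (e u) \<in> level_faces m u \<inter> level_faces m v"
      using bdry_pairs_fst[OF e[OF uv(1)]] bdry_pairs_fst[OF e[OF uv(2)]] by simp
    then show "u = v" using level_faces_disjoint[OF assms(1), of u d v m] uv(1,2) by blast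
  qed
  moreover have "e ` ?P \<subseteq> inner_bdry X (d + m) t"
  proof
    fix p assume "p \<in> e ` ?P"
    then obtain u where "u \<in> ?P" "p = e u" by blast
    then show "p \<in> inner_bdry X (d + m) t"
      using e level_faces_cell_subset[of u d t m] bdry_pairs_mono by blast
  qed
  ultimately show ?thesis by (intro card_inj_on_le) (simp_all add: finite_bdry_pairs)
qed

lemma exists_last_true:
  "P 0 \<Longrightarrow> \<not> P N \<Longrightarrow> \<exists>L<N. P L \<and> \<not> P (Suc L)"
proof (induction N)
  case (Suc N)
  then show ?case by (cases "P N") (auto intro: less_SucI)
qed simp

context
  fixes Q :: tri and X :: "complex set set" and n :: nat
  assumes pos: "tri_orient Q > 0"
    and X_sub: "X \<subseteq> level_faces n (child 0 (child 0 Q))"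
begin

private lemma X_sub_child: "X \<subseteq> level_faces (Suc n) (child 0 Q)"
  using X_sub level_faces_child_subset[of 0 n "child 0 Q"] by auto

private lemma X_sub_Q: "X \<subseteq> level_faces (n + 2) Q"
  using X_sub_child level_faces_child_subset[of 0 "Suc n" Q] by auto

lemma no_full_child: "\<not> level_faces (Suc n) (child i Q) \<subseteq> X" if "i < 6"
proof
  assume full: "level_faces (Suc n) (child i Q) \<subseteq> X"
  have pos0: "tri_orient (child 0 Q) > 0" using pos tri_orient_child_pos by blast
  show False
  proof (cases "i = 0")
    case True
    then have "level_faces n (child 1 (child 0 Q)) \<subseteq> level_faces n (child 0 (child 0 Q))"
      using full X_sub level_faces_child_subset[of 1 n "child 0 Q"] by auto
    moreover have "level_faces n (child 1 (child 0 Q)) \<inter> level_faces n (child 0 (child 0 Q)) = {}"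
      using level_faces_children_disjoint[OF pos0, of 1 0 n] by simp
    ultimately show False using level_faces_nonempty by blast
  next
    case False
    then have "level_faces (Suc n) (child i Q) \<inter> level_faces (Suc n) (child 0 Q) = {}"
      using level_faces_children_disjoint[OF pos that, of 0 "Suc n"] by simp
    then show False using full X_sub_child level_faces_nonempty[of "Suc n" "child i Q"] by blast
  qed
qed

text \<open>The full cell lies in \<open>child 0 Q\<close>, whose second side runs through its children 2 and 3
  and hence avoids \<open>X\<close>; so all \<open>2 ^ L\<close> faces counted by the side estimate are paid for by
  inner boundary pairs.\<close>

lemma two_pow_le_inner_bdry:
  assumes "u \<in> cells (Suc d) Q" "level_faces L u \<subseteq> X" "d + L = Suc n"
  shows "2 ^ L \<le> card (inner_bdry X (n + 2) Q)"
proof -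
  let ?c = "child 0 Q"
  have pos_c: "tri_orient ?c > 0" using pos tri_orient_child_pos by blast
  obtain i where i: "i < 6" "u \<in> cells d (child i Q)" using assms(1) by (auto simp: mem_cells_Suc)
  have "i = 0"
  proof (rule ccontr)
    assume "i \<noteq> 0"
    then have "level_faces (Suc n) (child i Q) \<inter> level_faces (Suc n) ?c = {}"
      using level_faces_children_disjoint[OF pos i(1), of 0] by simp
    then show False
      using level_faces_cell_subset[OF i(2), of L] assms(2,3) X_sub_child level_faces_nonempty[of L u]
      by auto
  qed
  then obtain u' where u': "u' \<in> cells d (rot ?c)" "level_faces L u' = level_faces L u"
    using cells_rot_ex[of u d ?c L] i(2) by blast
  have "2 ^ L \<le> count_in X (side_faces (Suc n) (rot ?c)) + card (inner_bdry X (Suc n) ?c)"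
    using full_cell_side_bound[of "rot ?c" u' d L X] pos_c u' assms(2,3) by simp
  moreover have "side_faces (Suc n) (rot ?c) \<inter> X = {}"
  proof -
    have "side_faces (Suc n) (rot ?c) \<subseteq> level_faces n (child 2 ?c) \<union> level_faces n (child 3 ?c)"
      unfolding side_faces_Suc_rot using side_faces_subset by blast
    moreover have "level_faces n (child 2 ?c) \<inter> level_faces n (child 0 ?c) = {}"
      "level_faces n (child 3 ?c) \<inter> level_faces n (child 0 ?c) = {}"
      using level_faces_children_disjoint[OF pos_c] by simp_all
    ultimately show ?thesis using X_sub by blast
  qed
  moreover have "card (inner_bdry X (Suc n) ?c) \<le> card (inner_bdry X (n + 2) Q)"
    using level_faces_child_subset[of 0 "Suc n" Q] by (intro card_bdry_pairs_mono) simp_all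
  ultimately show ?thesis by (simp add: count_in_disjoint)
qed

text \<open>Take for \<open>L\<close> the largest level of a cell of \<open>Q\<close> whose faces all lie in \<open>X\<close>.\<close>

lemma inner_bdry_bounds:
  assumes "X \<noteq> {}"
  shows "\<exists>L. 2 ^ L \<le> card (inner_bdry X (n + 2) Q) \<and>
    card X \<le> card (inner_bdry X (n + 2) Q) * 6 ^ Suc L"
proof -
  define full where "full m \<longleftrightarrow> (\<exists>u\<in>cells (n + 2 - m) Q. level_faces m u \<subseteq> X)" for m
  have "full 0"
  proof -
    obtain f where "f \<in> X" using assms by blast
    then have "f \<in> level_faces (n + 2) Q" using X_sub_Q by blast
    then obtain s where "s \<in> cells (n + 2) Q" "verts s = f" unfolding level_faces_def by blast
    then show ?thesis using \<open>f \<in> X\<close> by (auto simp: full_def level_faces_def)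
  qed
  moreover have "\<not> full (Suc n)"
    using no_full_child by (auto simp: full_def numeral_2_eq_2)
  ultimately obtain L where L: "L < Suc n" "full L" "\<not> full (Suc L)"
    using exists_last_true[of full] by blast
  then obtain u where u: "u \<in> cells (n + 2 - L) Q" "level_faces L u \<subseteq> X"
    unfolding full_def by blast
  have "n + 2 - L = Suc (Suc n - L)" "Suc n - L + L = Suc n" using L(1) by simp_all
  then have "2 ^ L \<le> card (inner_bdry X (n + 2) Q)"
    using two_pow_le_inner_bdry[of u "Suc n - L" L] u by (simp only:)
  moreover have "card X \<le> card (inner_bdry X (n + 2) Q) * 6 ^ Suc L"
  proof -
    let ?d = "n + 2 - Suc L"
    have "card X \<le> card {u \<in> cells ?d Q. level_faces (Suc L) u \<inter> X \<noteq> {}} * 6 ^ Suc L"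
      using card_le_cells_meeting[of X ?d "Suc L" Q] X_sub_Q L(1) by simp
    also have "\<dots> \<le> card (inner_bdry X (n + 2) Q) * 6 ^ Suc L"
      using card_cells_meeting_le_inner_bdry[OF pos, of ?d "Suc L" X] L(1,3)
      by (simp add: full_def)
    finally show ?thesis .
  qed
  ultimately show ?thesis by blast
qed

end

lemma powr_lower_bound:
  fixes L b N :: nat
  assumes bL: "2 ^ L \<le> b" and Nb: "N \<le> b * 6 ^ Suc L"
  defines "\<epsilon> \<equiv> 1 / (1 + log 2 6)"
  shows "6 powr (- \<epsilon>) * real N powr \<epsilon> \<le> real b"
proof -
  define a where "a = log 2 (6::real)"
  have a0: "a > 0" unfolding a_def by simp
  have "(1::nat) \<le> 2 ^ L" by simp
  then have "b \<ge> 1" using bL by linarith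
  then have b1: "real b \<ge> 1" by simp
  have e6: "(6::real) ^ L = (2 ^ L) powr a"
  proof -
    have "(2::real) powr a = 6" unfolding a_def by simp
    then have "(6::real) powr real L = ((2::real) powr real L) powr a"
      by (metis powr_powr mult.commute)
    then show ?thesis by (simp add: powr_realpow)
  qed
  have "((2::real) ^ L) powr a \<le> real b powr a"
  proof -
    have "real (2 ^ L) \<le> real b" using bL by (simp only: of_nat_le_iff)
    then have bLr: "(2::real) ^ L \<le> real b" by simp
    show ?thesis using bLr a0 by (intro powr_mono2) auto
  qed
  then have "(6::real) ^ L \<le> real b powr a" using e6 by simp
  then have "real b * 6 * 6 ^ L \<le> real b * 6 * real b powr a"
    by (rule mult_left_mono) auto
  moreover have "real N \<le> real (b * 6 ^ Suc L)" using Nb by (simp only: of_nat_le_iff)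
  moreover have "real (b * 6 ^ Suc L) = real b * 6 * 6 ^ L" by simp
  ultimately have "real N \<le> real b * 6 * real b powr a" by linarith
  also have "\<dots> = 6 * real b powr (1 + a)" using b1 by (simp add: powr_add)
  finally have Nb6: "real N / 6 \<le> real b powr (1 + a)" by simp
  have e: "\<epsilon> = 1 / (1 + a)" unfolding \<epsilon>_def a_def by simp
  have ep: "\<epsilon> > 0" using e a0 by simp
  have "(real N / 6) powr \<epsilon> \<le> (real b powr (1 + a)) powr \<epsilon>"
    using Nb6 ep by (intro powr_mono2) simp_all
  also have "\<dots> = real b powr ((1 + a) * \<epsilon>)" by (rule powr_powr)
  also have "(1 + a) * \<epsilon> = 1" using e a0 by simp
  also have "real b powr 1 = real b" using b1 by simp
  finally have 1: "(real N / 6) powr \<epsilon> \<le> real b" .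
  have "(real N / 6) powr \<epsilon> = real N powr \<epsilon> / 6 powr \<epsilon>" by (rule powr_divide)
  moreover have "6 powr (- \<epsilon>) = inverse (6 powr \<epsilon>)" by (rule powr_minus)
  ultimately have "6 powr (- \<epsilon>) * real N powr \<epsilon> = (real N / 6) powr \<epsilon>"
    by (simp only: divide_inverse mult.commute)
  then show ?thesis using 1 by simp
qed

section \<open>The hexacarpet\<close>

definition base_tri :: tri where
  "base_tri = (hv0, hv1, hv2)"

lemma tri_orient_base: "tri_orient base_tri > 0"
  by (simp add: base_tri_def hv0_def hv1_def hv2_def orient_def tri_orient.simps)

lemma subdiv_eq_children: "subdiv t = (\<lambda>i. child i t) ` {..<6}"
proof -
  have "{..<6::nat} = {0, 1, 2, 3, 4, 5}" by (auto simp: lessThan_def numeral_eq_Suc less_Suc_eq)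
  then show ?thesis by (cases t) (simp add: subdiv_def Let_def child.simps insert_commute)
qed

lemma Ttri_eq_cells: "Ttri n = cells n base_tri"
proof (induction n)
  case (Suc n)
  have "cells (n + 1) base_tri = (\<Union>s\<in>cells n base_tri. cells 1 s)" by (rule cells_add)
  moreover have "cells 1 s = subdiv s" for s by (auto simp: subdiv_eq_children)
  ultimately show ?case using Suc by simp
qed (simp add: base_tri_def)

lemma faces_eq_level_faces: "faces n = level_faces n base_tri"
proof -
  have "(\<lambda>(x, y, z). {x, y, z}) = verts" by (auto simp: fun_eq_iff)
  then show ?thesis by (simp add: faces_def level_faces_def Ttri_eq_cells)
qed

lemma Lmap_eq_Complex: "Lmap z = Complex (Re z / 2 + Im z / (2 * sqrt 3)) (Im z / 3)"
proof -
  have "sqrt 3 * sqrt 3 = (3::real)" by simp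
  then show ?thesis
    unfolding Lmap_def hv0_def hv1_def hv2_def by (simp add: complex_eq_iff field_simps)
qed

lemma sqrt_3_mult_sqrt_3: "sqrt 3 * (sqrt 3 * x) = 3 * (x::real)"
  by (simp add: mult.assoc[symmetric])

lemma Lmap_add: "Lmap (a + b) = Lmap a + Lmap b"
  by (simp add: Lmap_eq_Complex complex_eq_iff field_simps sqrt_3_mult_sqrt_3)

lemma Lmap_divide_numeral: "Lmap (a / numeral n) = Lmap a / numeral n"
  by (simp add: Lmap_eq_Complex complex_eq_iff field_simps sqrt_3_mult_sqrt_3)

lemma bij_Lmap: "bij Lmap"
proof (rule bijI)
  show "inj Lmap"
  proof (rule injI)
    fix a b assume eq: "Lmap a = Lmap b"
    have "Im a / 3 = Im b / 3" using eq by (metis Lmap_eq_Complex complex.sel(2))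
    then have im: "Im a = Im b" by simp
    have "Re a / 2 + Im a / (2 * sqrt 3) = Re b / 2 + Im b / (2 * sqrt 3)"
      using eq by (metis Lmap_eq_Complex complex.sel(1))
    moreover have "Im a / (2 * sqrt 3) = Im b / (2 * sqrt 3)" using im by simp
    ultimately have "Re a = Re b" by linarith
    with im show "a = b" by (simp add: complex_eq_iff)
  qed
  show "surj Lmap"
  proof (rule surjI)
    fix w
    show "Lmap (Complex (2 * Re w - 3 * Im w / sqrt 3) (3 * Im w)) = w"
      by (simp add: Lmap_eq_Complex complex_eq_iff field_simps)
  qed
qed

lemma bij_Lmap_pow: "bij (Lmap ^^ n)"
  using bij_Lmap by simp

lemma inj_Lmap_pow: "inj (Lmap ^^ n)"
  using bij_Lmap_pow bij_is_inj by blast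

fun map_tri :: "(complex \<Rightarrow> complex) \<Rightarrow> tri \<Rightarrow> tri" where
  "map_tri f (x, y, z) = (f x, f y, f z)"

lemma map_tri_Lmap_child: "map_tri Lmap (child i t) = child i (map_tri Lmap t)"
  by (cases t) (simp add: child.simps Lmap_add Lmap_divide_numeral)

lemma level_faces_map_tri_Lmap: "level_faces k (map_tri Lmap t) = image Lmap ` level_faces k t"
proof -
  have "cells k (map_tri Lmap t) = map_tri Lmap ` cells k t"
    by (induction k arbitrary: t) (simp_all add: map_tri_Lmap_child[symmetric] image_UN)
  moreover have "verts (map_tri Lmap s) = Lmap ` verts s" for s by (cases s) auto
  ultimately show ?thesis by (simp add: level_faces_def image_image)
qed

lemma map_tri_Lmap_base: "map_tri Lmap base_tri = child 0 base_tri"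
proof -
  have "Lmap hv0 = hv0" "Lmap hv1 = (hv0 + hv1) / 2" "Lmap hv2 = (hv0 + hv1 + hv2) / 3"
    unfolding Lmap_def by (simp_all add: hv0_def hv1_def hv2_def complex_eq_iff)
  then show ?thesis by (simp add: base_tri_def child.simps)
qed

lemma Lmap_pow_face_Suc:
  assumes "(Lmap ^^ n) ` f \<in> level_faces n base_tri"
  shows "(Lmap ^^ Suc n) ` f \<in> level_faces (Suc n) base_tri"
proof -
  have "(Lmap ^^ Suc n) ` f = Lmap ` ((Lmap ^^ n) ` f)" by (simp add: image_comp)
  also have "\<dots> \<in> level_faces n (map_tri Lmap base_tri)"
    using assms by (simp add: level_faces_map_tri_Lmap)
  also have "level_faces n (map_tri Lmap base_tri) \<subseteq> level_faces (Suc n) base_tri"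
    using level_faces_child_subset[of 0 n base_tri] by (simp add: map_tri_Lmap_base)
  finally show ?thesis .
qed

lemma Lmap_pow_face_mono:
  assumes "(Lmap ^^ n) ` f \<in> level_faces n base_tri" "n \<le> m"
  shows "(Lmap ^^ m) ` f \<in> level_faces m base_tri"
  using assms(2)
proof (induction rule: dec_induct)
  case (step k)
  then show ?case using Lmap_pow_face_Suc by blast
qed (use assms(1) in simp)

lemma Lmap_pow_face_grandchild:
  assumes "(Lmap ^^ n) ` f \<in> level_faces n base_tri"
  shows "(Lmap ^^ (n + 2)) ` f \<in> level_faces n (child 0 (child 0 base_tri))"
proof -
  have "(Lmap ^^ (n + 2)) ` f = Lmap ` (Lmap ` ((Lmap ^^ n) ` f))" by (simp add: image_comp)
  also have "\<dots> \<in> level_faces n (map_tri Lmap (map_tri Lmap base_tri))"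
    using assms by (simp add: level_faces_map_tri_Lmap)
  also have "map_tri Lmap (map_tri Lmap base_tri) = child 0 (child 0 base_tri)"
    by (simp add: map_tri_Lmap_base map_tri_Lmap_child)
  finally show ?thesis .
qed

lemma hexV_level: "f \<in> hexV \<longleftrightarrow> (\<exists>n. (Lmap ^^ n) ` f \<in> level_faces n base_tri)"
  by (simp add: hexV_def faces_eq_level_faces)

lemma edge_of_tri:
  assumes "A \<in> verts s" "B \<in> verts s" "A \<noteq> B"
  shows "\<exists>w. (A, B, w) \<in> {s, rot s, rot (rot s)} \<or> (B, A, w) \<in> {s, rot s, rot (rot s)}"
  using assms by (cases s) auto

lemma cells_same_edge_eq:
  assumes "tri_orient t > 0" "s \<in> cells m t" "s' \<in> cells m t"
    and "(A, B, w) \<in> {s, rot s, rot (rot s)}" "(A, B, w') \<in> {s', rot s', rot (rot s')}"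
  shows "s = s'"
proof -
  have rotation: "inside v = inside u \<and> tri_orient v = tri_orient u"
    if "v \<in> {u, rot u, rot (rot u)}" for u v
    using that by auto
  have "tri_orient s > 0" "tri_orient s' > 0" using assms(1-3) cells_orient_pos by blast+
  then have "orient A B w > 0" "orient A B w' > 0"
    using rotation[OF assms(4)] rotation[OF assms(5)] by (simp_all add: tri_orient.simps)
  then obtain p where "inside (A, B, w) p" "inside (A, B, w') p" using common_side_overlap by blast
  then have "inside s p" "inside s' p" using rotation[OF assms(4)] rotation[OF assms(5)] by simp_all
  then show ?thesis using cells_inside_unique[OF assms(1-3)] by blast
qed

text \<open>Triangles containing the same oriented side overlap, and of any three triangles sharing
  a side, two carry it in the same orientation.\<close>

lemma cells_common_side_le_2:
  assumes "tri_orient t > 0" "s1 \<in> cells m t" "s2 \<in> cells m t" "s3 \<in> cells m t" "A \<noteq> B"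
    and "{A, B} \<subseteq> verts s1" "{A, B} \<subseteq> verts s2" "{A, B} \<subseteq> verts s3"
  shows "s1 = s2 \<or> s1 = s3 \<or> s2 = s3"
proof -
  note edge = edge_of_tri[of A _ B]
  obtain w1 w2 w3 where
    "(A, B, w1) \<in> {s1, rot s1, rot (rot s1)} \<or> (B, A, w1) \<in> {s1, rot s1, rot (rot s1)}"
    "(A, B, w2) \<in> {s2, rot s2, rot (rot s2)} \<or> (B, A, w2) \<in> {s2, rot s2, rot (rot s2)}"
    "(A, B, w3) \<in> {s3, rot s3, rot (rot s3)} \<or> (B, A, w3) \<in> {s3, rot s3, rot (rot s3)}"
    using edge[of s1] edge[of s2] edge[of s3] assms(5-8) by (metis insert_subset)
  then show ?thesis
    using cells_same_edge_eq[OF assms(1,2,3)] cells_same_edge_eq[OF assms(1,2,4)]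
      cells_same_edge_eq[OF assms(1,3,4)]
    by metis
qed

lemma hexV_common_level:
  assumes "finite J" "J \<subseteq> hexV"
  obtains n where "\<forall>f\<in>J. (Lmap ^^ n) ` f \<in> level_faces n base_tri"
proof -
  have "\<forall>f\<in>J. \<exists>n. (Lmap ^^ n) ` f \<in> level_faces n base_tri" using assms(2) hexV_level by blast
  then obtain lv where lv: "\<forall>f\<in>J. (Lmap ^^ lv f) ` f \<in> level_faces (lv f) base_tri" by metis
  have "lv f \<le> Max (lv ` J)" if "f \<in> J" for f using assms(1) that by simp
  then show ?thesis using that lv Lmap_pow_face_mono by blast
qed

lemma hex_adj_common_side_unique:
  assumes adj: "hex_adj f g1" "hex_adj f g2" and common: "f \<inter> g1 = f \<inter> g2"
  shows "g1 = g2"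
proof (rule ccontr)
  assume ne: "g1 \<noteq> g2"
  have "finite {f, g1, g2}" "{f, g1, g2} \<subseteq> hexV" using adj by (auto simp: hex_adj_def)
  then obtain m where m: "\<forall>f\<in>{f, g1, g2}. (Lmap ^^ m) ` f \<in> level_faces m base_tri"
    by (rule hexV_common_level)
  define h where "h = Lmap ^^ m"
  have "h ` f \<in> level_faces m base_tri" "h ` g1 \<in> level_faces m base_tri"
    "h ` g2 \<in> level_faces m base_tri"
    using m unfolding h_def by simp_all
  then obtain s1 s2 s3 where s: "s1 \<in> cells m base_tri" "s2 \<in> cells m base_tri"
    "s3 \<in> cells m base_tri" "h ` f = verts s1" "h ` g1 = verts s2" "h ` g2 = verts s3"
    unfolding level_faces_def by (elim imageE) blast
  obtain a b where ab: "f \<inter> g1 = {a, b}" "a \<noteq> b"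
    using adj(1) by (auto simp: hex_adj_def card_2_iff)
  have inj: "inj h" unfolding h_def by (rule inj_Lmap_pow)
  then have "h a \<noteq> h b" using ab(2) by (auto dest: injD)
  moreover have "{h a, h b} \<subseteq> verts s1" "{h a, h b} \<subseteq> verts s2" "{h a, h b} \<subseteq> verts s3"
    using ab common s(4-6) by blast+
  ultimately have "s1 = s2 \<or> s1 = s3 \<or> s2 = s3"
    using cells_common_side_le_2[OF tri_orient_base s(1-3)] by blast
  then have "h ` f = h ` g1 \<or> h ` f = h ` g2 \<or> h ` g1 = h ` g2" using s(4-6) by auto
  then have "f = g1 \<or> f = g2 \<or> g1 = g2" using inj by (simp add: inj_image_eq_iff)
  then show False using ne adj by (auto simp: hex_adj_def)
qed

lemma finite_hexV_vertex: "f \<in> hexV \<Longrightarrow> finite f"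
proof -
  assume "f \<in> hexV"
  then obtain n s where "(Lmap ^^ n) ` f = verts s" by (auto simp: hexV_level level_faces_def)
  then have "finite ((Lmap ^^ n) ` f)" by (cases s) simp
  moreover have "inj_on (Lmap ^^ n) f" using inj_Lmap_pow by (rule inj_on_subset) simp
  ultimately show "finite f" by (rule finite_imageD)
qed

lemma finite_hex_neighbours: "f \<in> hexV \<Longrightarrow> finite {g. hex_adj f g}"
proof -
  assume f: "f \<in> hexV"
  have "inj_on (\<lambda>g. f \<inter> g) {g. hex_adj f g}"
    by (rule inj_onI) (use hex_adj_common_side_unique in blast)
  moreover have "(\<lambda>g. f \<inter> g) ` {g. hex_adj f g} \<subseteq> Pow f" by auto
  ultimately show ?thesis using finite_hexV_vertex[OF f] by (meson finite_Pow_iff inj_on_finite)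
qed

lemma finite_edge_boundary:
  assumes "J \<subseteq> hexV" "finite J"
  shows "finite (edge_boundary J)"
proof -
  have "edge_boundary J \<subseteq> (\<lambda>(f, g). {f, g}) ` (SIGMA f:J. {g. hex_adj f g})"
    by (auto simp: edge_boundary_def)
  moreover have "finite (SIGMA f:J. {g. hex_adj f g})"
    using assms finite_hex_neighbours by blast
  ultimately show ?thesis by (meson finite_imageI finite_subset)
qed

text \<open>Rescaling by \<open>Lmap ^^ M\<close> identifies the boundary pairs of the image of \<open>J\<close> in \<open>T_M\<close>
  with oriented edges of \<open>\<partial>J\<close>; as the pair leaves \<open>J\<close>, its orientation is determined by
  the edge.\<close>

lemma card_inner_bdry_le_edge_boundary:
  assumes J: "J \<subseteq> hexV" "finite J"
  shows "card (inner_bdry (image (Lmap ^^ M) ` J) M base_tri) \<le> card (edge_boundary J)"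
proof -
  define h where "h = Lmap ^^ M"
  define X where "X = image h ` J"
  have inj: "inj h" and surj: "surj h" unfolding h_def using bij_Lmap_pow bij_is_inj bij_is_surj by blast+
  define \<psi> where "\<psi> p = {h -` fst p, h -` snd p}" for p :: "complex set \<times> complex set"
  have mem: "h -` fst p \<in> J \<and> h -` snd p \<notin> J \<and> \<psi> p \<in> edge_boundary J"
    if p: "p \<in> inner_bdry X M base_tri" for p
  proof -
    obtain F G where pe: "p = (F, G)" by (cases p)
    have pp: "F \<in> X" "G \<in> level_faces M base_tri" "G \<notin> X" "card (F \<inter> G) = 2"
      using p pe by (auto simp: bdry_pairs_def)
    obtain f where f: "f \<in> J" "F = h ` f" using pp(1) unfolding X_def by blast
    have hf: "h -` F = f" using f(2) inj by (simp add: inj_vimage_image_eq)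
    define g where "g = h -` G"
    have hg: "h ` g = G" unfolding g_def using surj by (rule surj_image_vimage_eq)
    have "g \<in> hexV" unfolding hexV_def using hg pp(2) by (auto simp: faces_eq_level_faces h_def)
    moreover have "g \<notin> J" using hg pp(3) unfolding X_def by blast
    moreover have "card (f \<inter> g) = 2"
      using pp(4) inj surj card_vimage_inj[of h "F \<inter> G"] hf by (simp add: g_def vimage_Int)
    ultimately have "hex_adj f g" using J(1) f(1) by (auto simp: hex_adj_def)
    then have "\<psi> p \<in> edge_boundary J"
      using hf f(1) \<open>g \<notin> J\<close> unfolding edge_boundary_def \<psi>_def pe by (auto simp: g_def)
    then show ?thesis using hf f(1) \<open>g \<notin> J\<close> pe by (simp add: g_def)
  qed
  have "inj_on \<psi> (inner_bdry X M base_tri)"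
  proof (rule inj_onI)
    fix p q assume pq: "p \<in> inner_bdry X M base_tri" "q \<in> inner_bdry X M base_tri" "\<psi> p = \<psi> q"
    then have "h -` fst p = h -` fst q \<and> h -` snd p = h -` snd q"
      using mem[OF pq(1)] mem[OF pq(2)] unfolding \<psi>_def doubleton_eq_iff by auto
    then show "p = q" using surj by (metis prod_eq_iff surj_image_vimage_eq)
  qed
  moreover have "\<psi> ` inner_bdry X M base_tri \<subseteq> edge_boundary J" using mem by blast
  ultimately show ?thesis
    unfolding X_def h_def using card_inj_on_le finite_edge_boundary[OF J] by blast
qed

theorem lemma5p4:
  shows "\<exists>k>0. \<exists>\<epsilon>>0. \<forall>J. J \<subseteq> hexV \<and> finite J \<and> J \<noteq> {} \<longrightarrow>
           real (card (edge_boundary J)) \<ge> k * real (card J) powr \<epsilon>"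
proof (intro exI conjI allI impI)
  show "(6::real) powr (- (1 / (1 + log 2 6))) > 0" "1 / (1 + log 2 6) > (0::real)"
    by (simp_all add: add_pos_pos)
  fix J assume J: "J \<subseteq> hexV \<and> finite J \<and> J \<noteq> {}"
  obtain n where n: "\<forall>f\<in>J. (Lmap ^^ n) ` f \<in> level_faces n base_tri"
    using hexV_common_level J by meson
  define X where "X = image (Lmap ^^ (n + 2)) ` J"
  have "X \<subseteq> level_faces n (child 0 (child 0 base_tri))"
    using n Lmap_pow_face_grandchild by (auto simp: X_def)
  moreover have "X \<noteq> {}" using J by (simp add: X_def)
  ultimately obtain L where L: "2 ^ L \<le> card (inner_bdry X (n + 2) base_tri)"
    "card X \<le> card (inner_bdry X (n + 2) base_tri) * 6 ^ Suc L"
    using inner_bdry_bounds[OF tri_orient_base] by blast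
  have "card X = card J"
    unfolding X_def by (intro card_image inj_onI) (simp only: inj_image_eq_iff[OF inj_Lmap_pow])
  then have "6 powr (- (1 / (1 + log 2 6))) * real (card J) powr (1 / (1 + log 2 6))
      \<le> card (inner_bdry X (n + 2) base_tri)"
    using powr_lower_bound[OF L] by simp
  also have "\<dots> \<le> card (edge_boundary J)"
    using card_inner_bdry_le_edge_boundary[of J "n + 2"] J unfolding X_def by simp
  finally show "6 powr (- (1 / (1 + log 2 6))) * real (card J) powr (1 / (1 + log 2 6))
      \<le> real (card (edge_boundary J))" .
qed

end
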